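(* Suppose the undirected graph $\Gamma^u$ underlying the Hasse diagram $\Gamma$ of $\rho$ is a single cycle and $\Gamma$ has at least two vertices at which both adjacent arrows terminate. Then for every nontrivial group $G$ there exists a transitive function $u:\rho\to G$ that is not trivial. In particular, for the structural matrix algebra $$\begin{pmatrix}k&0&k&k\\0&k&k&k\\0&0&k&0\\0&0&0&k\end{pmatrix}$$ (i.e. $M(\rho,k)$ for $\rho$ on $\{1,2,3,4\}$ generated by $1\rho3,1\rho4,2\rho3,2\rho4$) and any nontrivial group $G$, there is a good $G$-grading that does not arise from a $G$-graded $\rho$-flag, i.e. for which there are no $g_1,\dots,g_4\in G$ with $\deg e_{ij}=g_ig_j^{-1}$ for all $i\rho j$.
   Context: $\rho$ is a preorder on a finite set $\{1,\dots,n\}$; $\mathcal C$ the poset of its equivalence classes ($i\sim j$ iff $i\rho j$ and $j\rho i$; $\hat i\le\hat j$ iff $i\rho j$). $\Gamma$ is the directed graph with vertex set $\mathcal C$ and an arrow from $\alpha$ to $\beta$ iff $\alpha<\beta$ with nothing strictly between; $\Gamma^u$ is $\Gamma$ with orientation forgotten. A transitive function on $\rho$ with values in $G$ is $u:\rho\to G$ with $u(i,j)u(j,r)=u(i,r)$ whenever $i\rho j$, $j\rho r$; it is trivial if there are $g_i\in G$ with $u(i,j)=g_ig_j^{-1}$ for all $i\rho j$. $M(\rho,k)$ ($k$ a field) is the algebra of $n\times n$ matrices with $(i,j)$-entry $0$ when $(i,j)\notin\rho$; a good $G$-grading on it is an algebra $G$-grading in which every matrix unit $e_{ij}$, $i\rho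 j$, is homogeneous (equivalently, given by a transitive function $u$ with $\deg e_{ij}=u(i,j)$). *)

theory Defs
  imports "HOL-Algebra.Group"
begin

definition is_preorder_on :: "nat \<Rightarrow> (nat \<times> nat) set \<Rightarrow> bool" where
  "is_preorder_on n rho \<longleftrightarrow>
     rho \<subseteq> {1..n} \<times> {1..n} \<and>
     (\<forall>i\<in>{1..n}. (i, i) \<in> rho) \<and>
     (\<forall>i j r. (i, j) \<in> rho \<longrightarrow> (j, r) \<in> rho \<longrightarrow> (i, r) \<in> rho)"

definition rho_class :: "nat \<Rightarrow> (nat \<times> nat) set \<Rightarrow> nat \<Rightarrow> nat set" where
  "rho_class n rho i = {j \<in> {1..n}. (i, j) \<in> rho \<and> (j, i) \<in> rho}"

definition rho_classes :: "nat \<Rightarrow> (nat \<times> nat) set \<Rightarrow> nat set set" where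
  "rho_classes n rho = rho_class n rho ` {1..n}"

definition cls_le :: "(nat \<times> nat) set \<Rightarrow> nat set \<Rightarrow> nat set \<Rightarrow> bool" where
  "cls_le rho a b \<longleftrightarrow> (\<exists>i\<in>a. \<exists>j\<in>b. (i, j) \<in> rho)"

definition cls_less :: "(nat \<times> nat) set \<Rightarrow> nat set \<Rightarrow> nat set \<Rightarrow> bool" where
  "cls_less rho a b \<longleftrightarrow> cls_le rho a b \<and> a \<noteq> b"

definition hasse_arrow :: "nat \<Rightarrow> (nat \<times> nat) set \<Rightarrow> nat set \<Rightarrow> nat set \<Rightarrow> bool" where
  "hasse_arrow n rho a b \<longleftrightarrow>
     a \<in> rho_classes n rho \<and> b \<in> rho_classes n rho \<and> cls_less rho a b \<and>
     \<not> (\<exists>c\<in>rho_classes n rho. cls_less rho a c \<and> cls_less rho c b)"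

definition hasse_adj :: "nat \<Rightarrow> (nat \<times> nat) set \<Rightarrow> nat set \<Rightarrow> nat set \<Rightarrow> bool" where
  "hasse_adj n rho a b \<longleftrightarrow> hasse_arrow n rho a b \<or> hasse_arrow n rho b a"

definition hasse_is_cycle :: "nat \<Rightarrow> (nat \<times> nat) set \<Rightarrow> bool" where
  "hasse_is_cycle n rho \<longleftrightarrow>
     (\<exists>m v. m \<ge> 3 \<and> bij_betw v {0..<m} (rho_classes n rho) \<and>
        (\<forall>a b. hasse_adj n rho a b \<longleftrightarrow>
                 (\<exists>k<m. {a, b} = {v k, v (Suc k mod m)})))"

definition sink_vertices :: "nat \<Rightarrow> (nat \<times> nat) set \<Rightarrow> nat set set" where
  "sink_vertices n rho =
     {a \<in> rho_classes n rho. \<forall>b. hasse_adj n rho a b \<longrightarrow> hasse_arrow n rho b a}"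

definition transitive_fun ::
  "('g, 'b) monoid_scheme \<Rightarrow> (nat \<times> nat) set \<Rightarrow> (nat \<Rightarrow> nat \<Rightarrow> 'g) \<Rightarrow> bool" where
  "transitive_fun G rho u \<longleftrightarrow>
     (\<forall>i j. (i, j) \<in> rho \<longrightarrow> u i j \<in> carrier G) \<and>
     (\<forall>i j r. (i, j) \<in> rho \<longrightarrow> (j, r) \<in> rho \<longrightarrow> u i j \<otimes>\<^bsub>G\<^esub> u j r = u i r)"

definition trivial_tfun ::
  "('g, 'b) monoid_scheme \<Rightarrow> nat \<Rightarrow> (nat \<times> nat) set \<Rightarrow> (nat \<Rightarrow> nat \<Rightarrow> 'g) \<Rightarrow> bool" where
  "trivial_tfun G n rho u \<longleftrightarrow>
     (\<exists>g. (\<forall>i\<in>{1..n}. g i \<in> carrier G) \<and>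
          (\<forall>i j. (i, j) \<in> rho \<longrightarrow> u i j = g i \<otimes>\<^bsub>G\<^esub> inv\<^bsub>G\<^esub> (g j)))"

definition rho_example :: "(nat \<times> nat) set" where
  "rho_example = {(1,1),(2,2),(3,3),(4,4),(1,3),(1,4),(2,3),(2,4)}"

end

theory Submission
  imports Defs
begin

text \<open>
  Fix a Hasse arrow \<open>a \<rightarrow> b\<close> of the cycle and \<open>g \<noteq> 1\<close>, and let \<open>u(i,j) = g\<close> if
  \<open>i \<le> a\<close> and \<open>b \<le> j\<close>, \<open>u(i,j) = 1\<close> otherwise.

  This \<open>u\<close> is transitive as soon as, for \<open>i \<le> j \<le> r\<close> with \<open>i \<le> a\<close> and \<open>b \<le> r\<close>,
  exactly one of \<open>j \<le> a\<close>, \<open>b \<le> j\<close> holds. Both together would give \<open>b \<le> a\<close>. If neither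
  held, the chains of arrows from \<open>i\<close> to \<open>j\<close> and from \<open>j\<close> to \<open>r\<close> could not use
  \<open>a \<rightarrow> b\<close>, so they would run monotonically along the path that remains of the cycle
  after deleting this edge; together with the chains from \<open>i\<close> to \<open>a\<close> and from \<open>b\<close> to
  \<open>r\<close> this orients the whole cycle towards \<open>r\<close>, which would then be the only sink.

  This \<open>u\<close> is not trivial: an arrow \<open>p \<rightarrow> q\<close> with \<open>p \<le> a < b \<le> q\<close> must be
  \<open>a \<rightarrow> b\<close> itself, so \<open>u\<close> is 1 on all other arrows of the cycle. These connect \<open>a\<close>
  with \<open>b\<close>, and \<open>g\<^sub>i g\<^sub>j\<^sup>-\<^sup>1 = 1\<close> forces \<open>g\<^sub>i = g\<^sub>j\<close>, so a trivial \<open>u\<close> would have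
  \<open>u(a,b) = 1\<close>.
\<close>

lemma is_preorder_on_field:
  "is_preorder_on n rho \<Longrightarrow> (i, j) \<in> rho \<Longrightarrow> i \<in> {1..n} \<and> j \<in> {1..n}"
  unfolding is_preorder_on_def by blast

lemma is_preorder_on_refl: "is_preorder_on n rho \<Longrightarrow> i \<in> {1..n} \<Longrightarrow> (i, i) \<in> rho"
  unfolding is_preorder_on_def by blast

lemma is_preorder_on_trans: "is_preorder_on n rho \<Longrightarrow> trans rho"
  unfolding is_preorder_on_def trans_def by blast

lemma rho_class_eq_iff:
  assumes "is_preorder_on n rho" "i \<in> {1..n}" "j \<in> {1..n}"
  shows "rho_class n rho i = rho_class n rho j \<longleftrightarrow> (i, j) \<in> rho \<and> (j, i) \<in> rho"
proof
  assume "rho_class n rho i = rho_class n rho j"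
  moreover have "j \<in> rho_class n rho j"
    using assms is_preorder_on_refl unfolding rho_class_def by auto
  ultimately show "(i, j) \<in> rho \<and> (j, i) \<in> rho"
    unfolding rho_class_def by auto
next
  assume "(i, j) \<in> rho \<and> (j, i) \<in> rho"
  then show "rho_class n rho i = rho_class n rho j"
    using is_preorder_on_trans[OF assms(1)] unfolding rho_class_def by (blast dest: transD)
qed

lemma cls_le_rho_class_iff:
  assumes "is_preorder_on n rho" "i \<in> {1..n}" "j \<in> {1..n}"
  shows "cls_le rho (rho_class n rho i) (rho_class n rho j) \<longleftrightarrow> (i, j) \<in> rho"
proof -
  have "i \<in> rho_class n rho i" "j \<in> rho_class n rho j"
    using assms is_preorder_on_refl unfolding rho_class_def by auto
  then show ?thesis
    using is_preorder_on_trans[OF assms(1)]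
    unfolding cls_le_def rho_class_def by (blast dest: transD)
qed

definition cut_fun ::
  "('g, 'b) monoid_scheme \<Rightarrow> 'g \<Rightarrow> (nat \<times> nat) set \<Rightarrow> nat \<Rightarrow> nat \<Rightarrow> nat \<Rightarrow> nat \<Rightarrow> 'g" where
  "cut_fun G g rho a b i j = (if (i, a) \<in> rho \<and> (b, j) \<in> rho then g else \<one>\<^bsub>G\<^esub>)"

lemma transitive_fun_cut_fun:
  assumes G: "group G" and g: "g \<in> carrier G" and trans: "trans rho"
    and ba: "(b, a) \<notin> rho"
    and separates: "\<And>x y z. (x, y) \<in> rho \<Longrightarrow> (y, z) \<in> rho \<Longrightarrow>
      (x, a) \<in> rho \<Longrightarrow> (b, z) \<in> rho \<Longrightarrow> (y, a) \<in> rho \<or> (b, y) \<in> rho"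
  shows "transitive_fun G rho (cut_fun G g rho a b)"
  unfolding transitive_fun_def
proof (intro conjI allI impI)
  fix i j
  show "cut_fun G g rho a b i j \<in> carrier G"
    using G g by (simp add: cut_fun_def group.is_monoid monoid.one_closed)
next
  fix i j r assume ij: "(i, j) \<in> rho" and jr: "(j, r) \<in> rho"
  have one: "\<one>\<^bsub>G\<^esub> \<otimes>\<^bsub>G\<^esub> x = x" "x \<otimes>\<^bsub>G\<^esub> \<one>\<^bsub>G\<^esub> = x" if "x \<in> carrier G" for x
    using G that by (simp_all add: group.is_monoid monoid.l_one monoid.r_one)
  have one_closed: "\<one>\<^bsub>G\<^esub> \<in> carrier G"
    using G by (simp add: group.is_monoid monoid.one_closed)
  consider "(i, a) \<in> rho" "(b, r) \<in> rho" "(j, a) \<in> rho"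
    | "(i, a) \<in> rho" "(b, r) \<in> rho" "(b, j) \<in> rho"
    | "\<not> ((i, a) \<in> rho \<and> (b, r) \<in> rho)"
    using separates[OF ij jr] by blast
  then show "cut_fun G g rho a b i j \<otimes>\<^bsub>G\<^esub> cut_fun G g rho a b j r = cut_fun G g rho a b i r"
  proof cases
    case 1
    then have "(b, j) \<notin> rho" using ba trans by (blast dest: transD)
    then show ?thesis using 1 g one by (simp add: cut_fun_def)
  next
    case 2
    then have "(j, a) \<notin> rho" using ba trans by (blast dest: transD)
    then show ?thesis using 2 g one by (simp add: cut_fun_def)
  next
    case 3
    then have "cut_fun G g rho a b i j = \<one>\<^bsub>G\<^esub>" "cut_fun G g rho a b j r = \<one>\<^bsub>G\<^esub>"
      "cut_fun G g rho a b i r = \<one>\<^bsub>G\<^esub>"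
      using ij jr trans unfolding cut_fun_def by (auto dest: transD)
    then show ?thesis using one one_closed by simp
  qed
qed

definition unit_links ::
  "('g, 'b) monoid_scheme \<Rightarrow> (nat \<times> nat) set \<Rightarrow> (nat \<Rightarrow> nat \<Rightarrow> 'g) \<Rightarrow> (nat \<times> nat) set" where
  "unit_links G rho u =
     {(i, j). (i, j) \<in> rho \<and> u i j = \<one>\<^bsub>G\<^esub> \<or> (j, i) \<in> rho \<and> u j i = \<one>\<^bsub>G\<^esub>}"

lemma trivial_tfun_one_if_unit_linked:
  assumes G: "group G" and field: "rho \<subseteq> {1..n} \<times> {1..n}" and triv: "trivial_tfun G n rho u"
    and ab: "(a, b) \<in> rho" and linked: "(a, b) \<in> (unit_links G rho u)\<^sup>*"
  shows "u a b = \<one>\<^bsub>G\<^esub>"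
proof -
  obtain h where h: "\<And>i. i \<in> {1..n} \<Longrightarrow> h i \<in> carrier G"
    and u: "\<And>i j. (i, j) \<in> rho \<Longrightarrow> u i j = h i \<otimes>\<^bsub>G\<^esub> inv\<^bsub>G\<^esub> (h j)"
    using triv unfolding trivial_tfun_def by blast
  have h_eq: "h i = h j" if "(i, j) \<in> rho" "u i j = \<one>\<^bsub>G\<^esub>" for i j
  proof -
    have "h i \<in> carrier G" "h j \<in> carrier G" using that(1) field h by auto
    moreover have "\<one>\<^bsub>G\<^esub> = h i \<otimes>\<^bsub>G\<^esub> inv\<^bsub>G\<^esub> (h j)" using that u by simp
    ultimately show ?thesis
      using G by (simp add: group.inv_solve_right group.is_monoid monoid.one_closed monoid.l_one)
  qed
  have "h a = h b"
    using linked
  proof (induction rule: rtrancl_induct)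
    case (step y z)
    then show ?case unfolding unit_links_def using h_eq by fastforce
  qed simp
  then show ?thesis
    using u[OF ab] ab field h G by (auto simp: group.r_inv)
qed

definition cyclic_adj :: "nat \<Rightarrow> nat \<Rightarrow> nat \<Rightarrow> bool" where
  "cyclic_adj m p q \<longleftrightarrow> (\<exists>k<m. {p, q} = {k, Suc k mod m})"

lemma cyclic_adj_iff:
  "cyclic_adj m p q \<longleftrightarrow> p < m \<and> q < m \<and> (q = Suc p \<or> p = Suc q \<or> {p, q} = {0, m - 1})"
proof
  assume "cyclic_adj m p q"
  then obtain k where k: "k < m" "{p, q} = {k, Suc k mod m}"
    unfolding cyclic_adj_def by blast
  show "p < m \<and> q < m \<and> (q = Suc p \<or> p = Suc q \<or> {p, q} = {0, m - 1})"
  proof (cases "Suc k = m")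
    case True
    then have "{p, q} = {0, m - 1}" using k by (auto simp: insert_commute)
    then show ?thesis using k(1) by (auto simp: doubleton_eq_iff)
  next
    case False
    then have "Suc k < m" "{p, q} = {k, Suc k}" using k by auto
    then show ?thesis by (auto simp: doubleton_eq_iff)
  qed
next
  assume pq: "p < m \<and> q < m \<and> (q = Suc p \<or> p = Suc q \<or> {p, q} = {0, m - 1})"
  then have "q = Suc p \<or> p = Suc q \<or> {p, q} = {0, m - 1}" by (rule conjunct2[OF conjunct2])
  then show "cyclic_adj m p q"
    unfolding cyclic_adj_def
  proof (elim disjE)
    assume "q = Suc p"
    then show "\<exists>k<m. {p, q} = {k, Suc k mod m}" using pq by (intro exI[of _ p]) simp
  next
    assume "p = Suc q"
    then show "\<exists>k<m. {p, q} = {k, Suc k mod m}"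
      using pq by (intro exI[of _ q]) (simp add: insert_commute)
  next
    assume pq0: "{p, q} = {0, m - 1}"
    have "0 < m" using pq by simp
    then have "{p, q} = {m - 1, Suc (m - 1) mod m}"
      by (subst pq0) (simp add: insert_commute)
    then show "\<exists>k<m. {p, q} = {k, Suc k mod m}" using \<open>0 < m\<close> by (intro exI[of _ "m - 1"]) simp
  qed
qed

lemma cyclic_adj_reflect:
  "p < m \<Longrightarrow> q < m \<Longrightarrow> cyclic_adj m (m - 1 - p) (m - 1 - q) \<longleftrightarrow> cyclic_adj m p q"
  unfolding cyclic_adj_iff doubleton_eq_iff by linarith

lemma ex_cyclic_edge_image_iff:
  "(\<exists>k<m. {a, b} = {f k, f (Suc k mod m)}) \<longleftrightarrow>
   (\<exists>p<m. \<exists>q<m. a = f p \<and> b = f q \<and> cyclic_adj m p q)"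
proof
  assume "\<exists>k<m. {a, b} = {f k, f (Suc k mod m)}"
  then obtain k where k: "k < m" "{a, b} = {f k, f (Suc k mod m)}" by blast
  moreover have "Suc k mod m < m" using k(1) by simp
  moreover have "cyclic_adj m k (Suc k mod m)"
    using k(1) unfolding cyclic_adj_def by blast
  moreover have "cyclic_adj m (Suc k mod m) k"
    using k(1) unfolding cyclic_adj_def by (metis insert_commute)
  moreover have "a = f k \<and> b = f (Suc k mod m) \<or> a = f (Suc k mod m) \<and> b = f k"
    using k(2) by (simp add: doubleton_eq_iff)
  ultimately show "\<exists>p<m. \<exists>q<m. a = f p \<and> b = f q \<and> cyclic_adj m p q"
    using k(1) by blast
next
  assume "\<exists>p<m. \<exists>q<m. a = f p \<and> b = f q \<and> cyclic_adj m p q"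
  then obtain p q k where ab: "a = f p" "b = f q" and k: "k < m" "{p, q} = {k, Suc k mod m}"
    unfolding cyclic_adj_def by blast
  have "{a, b} = f ` {p, q}" using ab by simp
  also have "\<dots> = {f k, f (Suc k mod m)}" using k(2) by simp
  finally show "\<exists>k<m. {a, b} = {f k, f (Suc k mod m)}" using k(1) by blast
qed

locale hasse_cycle =
  fixes n :: nat and rho :: "(nat \<times> nat) set" and m :: nat and v :: "nat \<Rightarrow> nat set"
  assumes preorder: "is_preorder_on n rho"
    and three_le_m: "3 \<le> m"
    and v_bij: "bij_betw v {0..<m} (rho_classes n rho)"
    and hasse_adj_iff: "hasse_adj n rho a b \<longleftrightarrow> (\<exists>k<m. {a, b} = {v k, v (Suc k mod m)})"
begin

definition rep :: "nat \<Rightarrow> nat" where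
  "rep k = (SOME i. i \<in> {1..n} \<and> v k = rho_class n rho i)"

lemma rep_class: "k < m \<Longrightarrow> rep k \<in> {1..n} \<and> v k = rho_class n rho (rep k)"
proof -
  assume "k < m"
  then have "v k \<in> rho_classes n rho" using v_bij bij_betwE by fastforce
  then obtain i where "i \<in> {1..n} \<and> v k = rho_class n rho i" unfolding rho_classes_def by auto
  then show ?thesis unfolding rep_def by (rule someI)
qed

definition below :: "nat \<Rightarrow> nat \<Rightarrow> bool" (infix "\<preceq>" 50) where
  "p \<preceq> q \<longleftrightarrow> (rep p, rep q) \<in> rho"

lemma v_eq_iff: "p < m \<Longrightarrow> q < m \<Longrightarrow> v p = v q \<longleftrightarrow> p = q"
  using bij_betw_imp_inj_on[OF v_bij] by (auto simp: inj_on_def)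

lemma rho_classes_eq: "rho_classes n rho = v ` {0..<m}"
  using bij_betw_imp_surj_on[OF v_bij] by simp

lemma cls_le_v_iff: "p < m \<Longrightarrow> q < m \<Longrightarrow> cls_le rho (v p) (v q) \<longleftrightarrow> p \<preceq> q"
  using rep_class cls_le_rho_class_iff[OF preorder] unfolding below_def by simp

lemma below_refl: "p < m \<Longrightarrow> p \<preceq> p"
  unfolding below_def using rep_class is_preorder_on_refl[OF preorder] by blast

lemma below_trans: "p \<preceq> q \<Longrightarrow> q \<preceq> r \<Longrightarrow> p \<preceq> r"
  unfolding below_def using is_preorder_on_trans[OF preorder] by (blast dest: transD)

lemma below_antisym: "p < m \<Longrightarrow> q < m \<Longrightarrow> p \<preceq> q \<Longrightarrow> q \<preceq> p \<Longrightarrow> p = q"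
  using rep_class rho_class_eq_iff[OF preorder] v_eq_iff unfolding below_def by metis

lemma rho_class_index: "i \<in> {1..n} \<Longrightarrow> \<exists>k<m. (i, rep k) \<in> rho \<and> (rep k, i) \<in> rho"
proof -
  assume i: "i \<in> {1..n}"
  then have "rho_class n rho i \<in> v ` {0..<m}"
    unfolding rho_classes_eq[symmetric] rho_classes_def by blast
  then obtain k where "k < m" "rho_class n rho i = rho_class n rho (rep k)"
    using rep_class by fastforce
  then show ?thesis using rep_class rho_class_eq_iff[OF preorder i] by blast
qed

definition cover :: "nat \<Rightarrow> nat \<Rightarrow> bool" where
  "cover p q \<longleftrightarrow> p < m \<and> q < m \<and> hasse_arrow n rho (v p) (v q)"

lemma cover_iff:
  "cover p q \<longleftrightarrow>
   p < m \<and> q < m \<and> p \<preceq> q \<and> p \<noteq> q \<and> \<not> (\<exists>r<m. p \<preceq> r \<and> r \<preceq> q \<and> r \<noteq> p \<and> r \<noteq> q)"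
proof (cases "p < m \<and> q < m")
  case True
  have less_iff: "cls_less rho (v x) (v y) \<longleftrightarrow> x \<preceq> y \<and> x \<noteq> y" if "x < m" "y < m" for x y
    using that cls_le_v_iff v_eq_iff unfolding cls_less_def by blast
  have "hasse_arrow n rho (v p) (v q) \<longleftrightarrow>
        cls_less rho (v p) (v q) \<and> \<not> (\<exists>r<m. cls_less rho (v p) (v r) \<and> cls_less rho (v r) (v q))"
    using True unfolding hasse_arrow_def rho_classes_eq by auto
  then show ?thesis
    using True less_iff unfolding cover_def by auto
next
  case False
  then show ?thesis unfolding cover_def by auto
qed

lemma cover_below: "cover p q \<Longrightarrow> p \<preceq> q"
  unfolding cover_iff by blast

lemma cover_asym: "cover p q \<Longrightarrow> \<not> cover q p"
  unfolding cover_iff using below_antisym by blast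

lemma cover_unique:
  assumes "cover p q" "cover a b" "p \<preceq> a" "b \<preceq> q"
  shows "p = a \<and> q = b"
proof -
  have "a \<preceq> b" "a \<noteq> b" "a < m" "b < m" using assms(2) unfolding cover_iff by auto
  then have "a \<preceq> q" "p \<preceq> b" using assms(3,4) below_trans by blast+
  then have "a = p \<or> a = q" "b = p \<or> b = q"
    using assms(1) \<open>a < m\<close> \<open>b < m\<close> assms(3,4) unfolding cover_iff by blast+
  moreover have "a \<noteq> q"
    using below_antisym \<open>a \<preceq> b\<close> \<open>a \<noteq> b\<close> \<open>b \<preceq> q\<close> \<open>a < m\<close> \<open>b < m\<close> by metis
  ultimately show ?thesis using \<open>a \<noteq> b\<close> by blast
qed

lemma hasse_adj_v_iff: "p < m \<Longrightarrow> q < m \<Longrightarrow> hasse_adj n rho (v p) (v q) \<longleftrightarrow> cyclic_adj m p q"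
  unfolding hasse_adj_iff ex_cyclic_edge_image_iff using v_eq_iff by (metis cyclic_adj_iff)

lemma cover_either_iff: "p < m \<Longrightarrow> q < m \<Longrightarrow> cover p q \<or> cover q p \<longleftrightarrow> cyclic_adj m p q"
  using hasse_adj_v_iff unfolding cover_def hasse_adj_def by blast

lemma cover_Suc: "Suc k < m \<Longrightarrow> cover k (Suc k) \<or> cover (Suc k) k"
  using cover_either_iff cyclic_adj_iff by simp

lemma cover_last_first_either: "cover (m - 1) 0 \<or> cover 0 (m - 1)"
  using cover_either_iff[of "m - 1" 0] three_le_m by (simp add: cyclic_adj_iff insert_commute)

lemma below_imp_rtrancl_cover:
  "p < m \<Longrightarrow> q < m \<Longrightarrow> p \<preceq> q \<Longrightarrow> (p, q) \<in> {(p, q). cover p q}\<^sup>*"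
proof (induction "card {r. r < m \<and> p \<preceq> r \<and> r \<preceq> q}" arbitrary: p q rule: less_induct)
  case less
  show ?case
  proof (cases "p = q \<or> cover p q")
    case True
    then show ?thesis by auto
  next
    case False
    then obtain r where r: "r < m" "p \<preceq> r" "r \<preceq> q" "r \<noteq> p" "r \<noteq> q"
      using less.prems unfolding cover_iff by blast
    let ?I = "\<lambda>p q. {r. r < m \<and> p \<preceq> r \<and> r \<preceq> q}"
    have "?I p r \<subset> ?I p q"
      using r less.prems below_trans below_refl below_antisym by blast
    then have "(p, r) \<in> {(p, q). cover p q}\<^sup>*"
      using less r psubset_card_mono[of "?I p q"] by simp
    moreover have "?I r q \<subset> ?I p q"
      using r less.prems below_trans below_refl below_antisym by blast
    then have "(r, q) \<in> {(p, q). cover p q}\<^sup>*"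
      using less r psubset_card_mono[of "?I p q"] by simp
    ultimately show ?thesis by (rule rtrancl_trans)
  qed
qed

lemma sink_index:
  assumes "k < m" "v k \<in> sink_vertices n rho" "q < m" "cyclic_adj m k q"
  shows "cover q k"
  using assms hasse_adj_v_iff unfolding sink_vertices_def cover_def by blast

end

lemma hasse_cycle_reflect:
  assumes "hasse_cycle n rho m v"
  shows "hasse_cycle n rho m (\<lambda>k. v (m - 1 - k))"
proof -
  interpret hasse_cycle n rho m v by (fact assms)
  have "bij_betw (\<lambda>k. m - 1 - k) {0..<m} {0..<m}"
    by (rule bij_betw_byWitness[where f' = "\<lambda>k. m - 1 - k"]) auto
  then have bij: "bij_betw (\<lambda>k. v (m - 1 - k)) {0..<m} (rho_classes n rho)"
    using bij_betw_trans v_bij by (auto simp: comp_def)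
  have reflect: "(\<exists>p<m. \<exists>q<m. a = v p \<and> b = v q \<and> cyclic_adj m p q) \<longleftrightarrow>
      (\<exists>p<m. \<exists>q<m. a = v (m - 1 - p) \<and> b = v (m - 1 - q) \<and> cyclic_adj m p q)" for a b
  proof
    assume "\<exists>p<m. \<exists>q<m. a = v p \<and> b = v q \<and> cyclic_adj m p q"
    then obtain p q where "p < m" "q < m" "a = v p" "b = v q" "cyclic_adj m p q" by blast
    moreover have "m - 1 - (m - 1 - p) = p" "m - 1 - (m - 1 - q) = q"
      using \<open>p < m\<close> \<open>q < m\<close> by auto
    ultimately have "m - 1 - p < m" "m - 1 - q < m" "a = v (m - 1 - (m - 1 - p))"
      "b = v (m - 1 - (m - 1 - q))" "cyclic_adj m (m - 1 - p) (m - 1 - q)"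
      using cyclic_adj_reflect by auto
    then show "\<exists>p<m. \<exists>q<m. a = v (m - 1 - p) \<and> b = v (m - 1 - q) \<and> cyclic_adj m p q"
      by blast
  next
    assume "\<exists>p<m. \<exists>q<m. a = v (m - 1 - p) \<and> b = v (m - 1 - q) \<and> cyclic_adj m p q"
    then obtain p q where "p < m" "q < m" "a = v (m - 1 - p)" "b = v (m - 1 - q)" "cyclic_adj m p q"
      by blast
    moreover have "m - 1 - p < m" "m - 1 - q < m" using \<open>p < m\<close> by auto
    ultimately show "\<exists>p<m. \<exists>q<m. a = v p \<and> b = v q \<and> cyclic_adj m p q"
      using cyclic_adj_reflect by blast
  qed
  have "hasse_adj n rho a b \<longleftrightarrow> (\<exists>k<m. {a, b} = {v (m - 1 - k), v (m - 1 - (Suc k mod m))})" for a b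
    unfolding hasse_adj_iff ex_cyclic_edge_image_iff[where f = v]
      ex_cyclic_edge_image_iff[where f = "\<lambda>k. v (m - 1 - k)"]
    by (rule reflect)
  then show ?thesis
    using preorder three_le_m bij unfolding hasse_cycle_def by blast
qed

text \<open>The arrow \<open>a \<rightarrow> b\<close> of the cut is \<open>v (m - 1) \<rightarrow> v 0\<close>; if the edge between
  \<open>v (m - 1)\<close> and \<open>v 0\<close> points the other way, the enumeration is reflected first
  (\<open>hasse_cycle_reflect\<close>).\<close>

locale hasse_cycle_cut = hasse_cycle +
  assumes cover_last_first: "cover (m - 1) 0"
    and two_sinks: "2 \<le> card (sink_vertices n rho)"
begin

definition ascending :: "nat \<Rightarrow> nat \<Rightarrow> bool" where
  "ascending p q \<longleftrightarrow> p \<le> q \<and> (\<forall>k. p \<le> k \<and> k < q \<longrightarrow> cover k (Suc k))"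

definition descending :: "nat \<Rightarrow> nat \<Rightarrow> bool" where
  "descending p q \<longleftrightarrow> q \<le> p \<and> (\<forall>k. q \<le> k \<and> k < p \<longrightarrow> cover (Suc k) k)"

definition monotone_path :: "nat \<Rightarrow> nat \<Rightarrow> bool" where
  "monotone_path p q \<longleftrightarrow> ascending p q \<or> descending p q"

lemma last_ne_first: "m - 1 \<noteq> 0"
  using three_le_m by simp

lemma ascending_below: "ascending p q \<Longrightarrow> q < m \<Longrightarrow> p \<preceq> q"
  unfolding ascending_def
proof (elim conjE)
  assume "p \<le> q" "\<forall>k. p \<le> k \<and> k < q \<longrightarrow> cover k (Suc k)" "q < m"
  then show "p \<preceq> q"
    by (induction q rule: dec_induct) (auto intro: below_refl below_trans cover_below)
qed

lemma descending_below: "descending p q \<Longrightarrow> p < m \<Longrightarrow> p \<preceq> q"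
  unfolding descending_def
proof (elim conjE)
  assume "q \<le> p" "\<forall>k. q \<le> k \<and> k < p \<longrightarrow> cover (Suc k) k" "p < m"
  then show "p \<preceq> q"
    by (induction p rule: dec_induct) (auto intro: below_refl below_trans cover_below)
qed

lemma monotone_path_below: "monotone_path p q \<Longrightarrow> p < m \<Longrightarrow> q < m \<Longrightarrow> p \<preceq> q"
  unfolding monotone_path_def using ascending_below descending_below by blast

lemma monotone_path_step:
  assumes path: "monotone_path p q" and qc: "cover q c" and not_last_first: "(q, c) \<noteq> (m - 1, 0)"
  shows "monotone_path p c"
proof -
  have "cyclic_adj m q c"
    using qc cover_either_iff unfolding cover_def by blast
  moreover have "(q, c) \<noteq> (0, m - 1)"
    using qc cover_last_first cover_asym by blast
  ultimately have "c = Suc q \<or> q = Suc c"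
    using not_last_first by (auto simp: cyclic_adj_iff doubleton_eq_iff)
  then show ?thesis
  proof
    assume c: "c = Suc q"
    then have "\<not> cover c q" using qc cover_asym by blast
    have "ascending p q"
      using path unfolding monotone_path_def
    proof
      assume "descending p q"
      then have "q \<le> p" "\<not> q < p"
        using \<open>\<not> cover c q\<close> c unfolding descending_def by auto
      then show "ascending p q" unfolding ascending_def by auto
    qed
    then show ?thesis
      using qc c unfolding monotone_path_def ascending_def by (auto simp: less_Suc_eq)
  next
    assume q: "q = Suc c"
    then have "\<not> cover c q" using qc cover_asym by blast
    have "descending p q"
      using path unfolding monotone_path_def
    proof
      assume "ascending p q"
      then have "p \<le> q" "\<not> p < q"
        using \<open>\<not> cover c q\<close> q unfolding ascending_def by auto
      then show "descending p q" unfolding descending_def by auto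
    qed
    moreover have "k = c \<or> Suc c \<le> k" if "c \<le> k" for k
      using that by linarith
    ultimately show ?thesis
      using qc q unfolding monotone_path_def descending_def by fastforce
  qed
qed

lemma below_imp_monotone_paths:
  assumes "p < m" "q < m" "p \<preceq> q"
  shows "monotone_path p q \<or> monotone_path p (m - 1) \<and> monotone_path 0 q"
  using below_imp_rtrancl_cover[OF assms]
proof (induction rule: rtrancl_induct)
  case base
  then show ?case unfolding monotone_path_def ascending_def by auto
next
  case (step q c)
  then have "cover q c" by simp
  show ?case
  proof (cases "(q, c) = (m - 1, 0)")
    case True
    then show ?thesis
      using step.IH unfolding monotone_path_def ascending_def by auto
  next
    case False
    then show ?thesis
      using step.IH monotone_path_step[OF _ \<open>cover q c\<close>] by blast
  qed
qed

lemma monotone_path_to_last: "monotone_path p (m - 1) \<Longrightarrow> p < m \<Longrightarrow> ascending p (m - 1)"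
  unfolding monotone_path_def ascending_def descending_def by auto

lemma monotone_path_from_first: "monotone_path 0 q \<Longrightarrow> ascending 0 q"
  unfolding monotone_path_def ascending_def descending_def by auto

lemma sink_vertex_index:
  assumes "k < m" "v k \<in> sink_vertices n rho"
  shows "Suc k < m" and "cover (Suc k) k" and "k = Suc j \<Longrightarrow> cover j k"
proof -
  have sink: "cover q k" if "q < m" "cyclic_adj m k q" for q
    using sink_index assms that by blast
  have "k \<noteq> m - 1"
    using sink[of 0] cover_last_first cover_asym three_le_m
    by (auto simp: cyclic_adj_iff insert_commute)
  then show "Suc k < m" using assms(1) by simp
  then show "cover (Suc k) k"
    using sink[of "Suc k"] by (simp add: cyclic_adj_iff)
  show "cover j k" if "k = Suc j"
    using sink[of j] that assms(1) by (simp add: cyclic_adj_iff)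
qed

text \<open>The arrows run \<open>0 \<rightarrow> \<dots> \<rightarrow> z \<leftarrow> \<dots> \<leftarrow> x \<rightarrow> \<dots> \<rightarrow> m - 1 \<rightarrow> 0\<close>, so \<open>z\<close> is the only sink.\<close>

lemma card_sink_vertices_le_one:
  assumes "ascending 0 z" "descending x z" "ascending x (m - 1)"
  shows "card (sink_vertices n rho) \<le> 1"
proof -
  have "sink_vertices n rho \<subseteq> {v z}"
  proof
    fix a assume a: "a \<in> sink_vertices n rho"
    then obtain k where k: "k < m" "a = v k"
      unfolding sink_vertices_def rho_classes_eq by auto
    note sink = sink_vertex_index[OF k(1) a[unfolded k(2)]]
    have "\<not> cover k (Suc k)" using sink(2) cover_asym by blast
    have "z \<le> k"
    proof (rule ccontr)
      assume "\<not> z \<le> k"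
      then show False using assms(1) \<open>\<not> cover k (Suc k)\<close> unfolding ascending_def by simp
    qed
    moreover have "k < x"
    proof (rule ccontr)
      assume "\<not> k < x"
      then show False
        using assms(3) sink(1) \<open>\<not> cover k (Suc k)\<close> unfolding ascending_def by simp
    qed
    moreover have "\<not> z < k"
    proof
      assume "z < k"
      then obtain j where j: "k = Suc j" "z \<le> j"
        using gr0_implies_Suc by fastforce
      then have "cover k j"
        using assms(2) \<open>k < x\<close> unfolding descending_def by simp
      with sink(3)[OF j(1)] show False using cover_asym by blast
    qed
    ultimately show "a \<in> {v z}" using k by simp
  qed
  then show ?thesis
    using card_mono[of "{v z}"] by simp
qed

lemma below_cut_separates:
  assumes "x < m" "y < m" "z < m" "x \<preceq> y" "y \<preceq> z" "x \<preceq> m - 1" "0 \<preceq> z"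
  shows "y \<preceq> m - 1 \<or> 0 \<preceq> y"
proof (rule ccontr)
  assume not_cut: "\<not> (y \<preceq> m - 1 \<or> 0 \<preceq> y)"
  have last: "m - 1 < m" using three_le_m by simp
  have asc_x: "ascending x (m - 1)"
    using below_imp_monotone_paths[OF \<open>x < m\<close> last \<open>x \<preceq> m - 1\<close>] monotone_path_to_last
      \<open>x < m\<close> by blast
  have asc_z: "ascending 0 z"
    using below_imp_monotone_paths[OF _ \<open>z < m\<close> \<open>0 \<preceq> z\<close>] monotone_path_from_first
      \<open>z < m\<close> by auto
  have "monotone_path x y"
    using below_imp_monotone_paths[OF \<open>x < m\<close> \<open>y < m\<close> \<open>x \<preceq> y\<close>] monotone_path_below
      not_cut \<open>y < m\<close> by auto
  moreover have "\<not> ascending x y"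
  proof
    assume "ascending x y"
    then have "ascending y (m - 1)" using asc_x \<open>y < m\<close> unfolding ascending_def by auto
    then show False using ascending_below last not_cut by blast
  qed
  ultimately have desc_xy: "descending x y" unfolding monotone_path_def by blast
  have "monotone_path y z"
    using below_imp_monotone_paths[OF \<open>y < m\<close> \<open>z < m\<close> \<open>y \<preceq> z\<close>] monotone_path_below
      not_cut \<open>y < m\<close> last by blast
  moreover have "\<not> ascending y z"
  proof
    assume "ascending y z"
    then have "ascending 0 y" using asc_z unfolding ascending_def by auto
    then show False using ascending_below \<open>y < m\<close> not_cut by blast
  qed
  ultimately have "descending y z" unfolding monotone_path_def by blast
  with desc_xy have "descending x z" unfolding descending_def by auto (meson not_le)
  then show False
    using card_sink_vertices_le_one asc_z asc_x two_sinks by fastforce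
qed

lemma rho_cut_separates:
  assumes "(x, y) \<in> rho" "(y, z) \<in> rho" "(x, rep (m - 1)) \<in> rho" "(rep 0, z) \<in> rho"
  shows "(y, rep (m - 1)) \<in> rho \<or> (rep 0, y) \<in> rho"
proof -
  have trans: "trans rho" using is_preorder_on_trans[OF preorder] .
  obtain x' y' z' where idx: "x' < m" "y' < m" "z' < m"
    and "(x, rep x') \<in> rho" "(rep x', x) \<in> rho" "(y, rep y') \<in> rho" "(rep y', y) \<in> rho"
      "(z, rep z') \<in> rho" "(rep z', z) \<in> rho"
    using rho_class_index is_preorder_on_field[OF preorder] assms(1,2) by meson
  then have "x' \<preceq> y'" "y' \<preceq> z'" "x' \<preceq> m - 1" "0 \<preceq> z'"
    using assms trans unfolding below_def by (meson transD)+
  then have "y' \<preceq> m - 1 \<or> 0 \<preceq> y'"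
    using below_cut_separates idx by blast
  then show ?thesis
    using \<open>(y, rep y') \<in> rho\<close> \<open>(rep y', y) \<in> rho\<close> trans unfolding below_def by (meson transD)
qed

lemma cut_fun_unit_link:
  assumes "Suc k < m"
  shows "(rep (Suc k), rep k) \<in> unit_links G rho (cut_fun G g rho (rep (m - 1)) (rep 0))"
proof -
  obtain p q where pq: "cover p q" "{p, q} = {k, Suc k}"
    using cover_Suc[OF assms] by blast
  have "\<not> (p \<preceq> m - 1 \<and> 0 \<preceq> q)"
  proof
    assume "p \<preceq> m - 1 \<and> 0 \<preceq> q"
    then have "p = m - 1" "q = 0"
      using cover_unique[OF pq(1) cover_last_first] by auto
    then show False using pq(2) assms three_le_m by (auto simp: doubleton_eq_iff)
  qed
  then have "(rep p, rep q) \<in> rho" "cut_fun G g rho (rep (m - 1)) (rep 0) (rep p) (rep q) = \<one>\<^bsub>G\<^esub>"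
    using cover_below[OF pq(1)] unfolding below_def cut_fun_def by auto
  then show ?thesis
    using pq(2) unfolding unit_links_def by (auto simp: doubleton_eq_iff)
qed

theorem exists_nontrivial_transitive_fun:
  assumes G: "group G" and g: "g \<in> carrier G" "g \<noteq> \<one>\<^bsub>G\<^esub>"
  shows "\<exists>u. transitive_fun G rho u \<and> \<not> trivial_tfun G n rho u"
proof (intro exI conjI)
  let ?u = "cut_fun G g rho (rep (m - 1)) (rep 0)"
  have last_first: "(rep (m - 1), rep 0) \<in> rho"
    using cover_below[OF cover_last_first] unfolding below_def .
  have "(rep 0, rep (m - 1)) \<notin> rho"
    using below_antisym[of 0 "m - 1"] cover_below[OF cover_last_first] last_ne_first three_le_m
    unfolding below_def by auto
  then show "transitive_fun G rho ?u"
    using transitive_fun_cut_fun[OF G g(1) is_preorder_on_trans[OF preorder]] rho_cut_separates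
    by blast
  have "(rep k, rep 0) \<in> (unit_links G rho ?u)\<^sup>*" if "k < m" for k
    using that
  proof (induction k)
    case (Suc k)
    then have "(rep k, rep 0) \<in> (unit_links G rho ?u)\<^sup>*" by simp
    with cut_fun_unit_link[OF Suc.prems] show ?case by (rule converse_rtrancl_into_rtrancl)
  qed simp
  then have "(rep (m - 1), rep 0) \<in> (unit_links G rho ?u)\<^sup>*"
    using three_le_m by simp
  moreover have "?u (rep (m - 1)) (rep 0) \<noteq> \<one>\<^bsub>G\<^esub>"
    using last_first g(2) three_le_m below_refl unfolding cut_fun_def below_def by simp
  ultimately show "\<not> trivial_tfun G n rho ?u"
    using trivial_tfun_one_if_unit_linked[OF G _ _ last_first] preorder
    unfolding is_preorder_on_def by blast
qed

end

lemma exists_nontrivial_transitive_fun_if_hasse_cycle: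
  assumes pre: "is_preorder_on n rho" and cycle: "hasse_is_cycle n rho"
    and sinks: "2 \<le> card (sink_vertices n rho)"
    and G: "group G" and g: "g \<in> carrier G" "g \<noteq> \<one>\<^bsub>G\<^esub>"
  shows "\<exists>u. transitive_fun G rho u \<and> \<not> trivial_tfun G n rho u"
proof -
  obtain m v where "hasse_cycle n rho m v"
    using pre cycle unfolding hasse_is_cycle_def hasse_cycle_def by blast
  then interpret hasse_cycle n rho m v .
  consider "cover (m - 1) 0" | "cover 0 (m - 1)"
    using cover_last_first_either by blast
  then show ?thesis
  proof cases
    case 1
    then interpret hasse_cycle_cut n rho m v
      using sinks by unfold_locales
    show ?thesis by (rule exists_nontrivial_transitive_fun[OF G g])
  next
    case 2
    let ?w = "\<lambda>k. v (m - 1 - k)"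
    interpret reflected: hasse_cycle n rho m ?w
      using hasse_cycle_reflect hasse_cycle_axioms by blast
    have "reflected.cover (m - 1) 0"
      using 2 three_le_m unfolding cover_def reflected.cover_def by simp
    then interpret reflected: hasse_cycle_cut n rho m ?w
      using sinks by unfold_locales
    show ?thesis by (rule reflected.exists_nontrivial_transitive_fun[OF G g])
  qed
qed

lemma rho_example_nontrivial_transitive_fun:
  assumes G: "group G" and g: "g \<in> carrier G" "g \<noteq> \<one>\<^bsub>G\<^esub>"
  shows "\<exists>u. transitive_fun G rho_example u \<and> \<not> trivial_tfun G 4 rho_example u"
proof (intro exI conjI)
  let ?u = "cut_fun G g rho_example 1 3"
  show "transitive_fun G rho_example ?u"
    by (rule transitive_fun_cut_fun[OF G g(1)]) (auto simp: rho_example_def trans_def)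
  have "(1, 3) \<in> (unit_links G rho_example ?u)\<^sup>*"
  proof -
    have "(1, 4) \<in> unit_links G rho_example ?u" "(4, 2) \<in> unit_links G rho_example ?u"
      "(2, 3) \<in> unit_links G rho_example ?u"
      unfolding unit_links_def cut_fun_def rho_example_def by auto
    then show ?thesis
      by (meson rtrancl.rtrancl_refl rtrancl.rtrancl_into_rtrancl)
  qed
  moreover have "(1, 3) \<in> rho_example" "rho_example \<subseteq> {1..4} \<times> {1..4}"
    unfolding rho_example_def by auto
  moreover have "?u 1 3 \<noteq> \<one>\<^bsub>G\<^esub>"
    using g(2) unfolding cut_fun_def rho_example_def by simp
  ultimately show "\<not> trivial_tfun G 4 rho_example ?u"
    using trivial_tfun_one_if_unit_linked[OF G] by blast
qed

theorem mainTheorem14: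
  shows "(\<forall>(n::nat) rho. is_preorder_on n rho \<longrightarrow> hasse_is_cycle n rho \<longrightarrow>
            card (sink_vertices n rho) \<ge> 2 \<longrightarrow>
            (\<forall>G :: ('g, 'b) monoid_scheme. group G \<longrightarrow> carrier G \<noteq> {\<one>\<^bsub>G\<^esub>} \<longrightarrow>
               (\<exists>u. transitive_fun G rho u \<and> \<not> trivial_tfun G n rho u)))
       \<and> (\<forall>G :: ('g, 'b) monoid_scheme. group G \<longrightarrow> carrier G \<noteq> {\<one>\<^bsub>G\<^esub>} \<longrightarrow>
            (\<exists>u. transitive_fun G rho_example u \<and> \<not> trivial_tfun G 4 rho_example u))"
proof -
  have nontrivial: "\<exists>g \<in> carrier G. g \<noteq> \<one>\<^bsub>G\<^esub>"
    if "group G" "carrier G \<noteq> {\<one>\<^bsub>G\<^esub>}" for G :: "('g, 'b) monoid_scheme"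
    using that group.is_monoid monoid.one_closed by blast
  show ?thesis
    using nontrivial exists_nontrivial_transitive_fun_if_hasse_cycle
      rho_example_nontrivial_transitive_fun by meson
qed

end
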